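(* The probabilistic function $\mathit{I2P}:\mathbb{N}\to\mathcal D(\mathbb{N})$ defined below belongs to $\mathscr{PR}$.
   Context: Fix a computable bijection $\mathit{pair}:\mathbb{N}\times\mathbb{N}\to\mathbb{N}$ with computable inverse; a natural $n=\mathit{pair}(a,b)$ with $b>0$ represents the rational $a/b$. $\mathit{I2P}(n)(1)=q$ and $\mathit{I2P}(n)(0)=1-q$ if $n$ represents a rational $q$ with $0\le q\le 1$, and $\mathit{I2P}(n)(y)=0$ in all other cases. $\mathcal D(X)$ is the set of $\mathcal D:X\to[0,1]$ with $\sum_x\mathcal D(x)\le1$; a PF is a function $\mathbb{N}^k\to\mathcal D(\mathbb{N})$. Basic PFs: $z(n)(0)=1$; $s(n)(n+1)=1$; $\Pi^n_m(k_1,\dots,k_n)(k_m)=1$; $r(x)(x)=r(x)(x+1)=1/2$ (other values $0$). Generalized composition $(f\odot(g_1,\dots,g_n))(\vec x)(y)=\sum_{z_1,\dots,z_n} f(z_1,\dots,z_n)(y)\prod_i g_i(\vec x)(z_i)$; primitive recursion $h=\mathrm{rec}(f,g)$: $h(\vec x,0)=f(\vec x)$, $h(\vec x,y+1)(w)=\sum_z h(\vec x,y)(z)\, g(\vec x,y,z)(w)$; minimization $\mu f(\vec x)(y)=f(\vec x,y)(0)\prod_{z<y}\sum_{k>0}f(\vec x,z)(k)$. $\mathscr{PR}$ is the smallest class of PFs containing the basic PFs and closed under these three operations. *)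

theory Defs
  imports "HOL-Analysis.Analysis" "HOL-Library.Nat_Bijection"
begin

text \<open>A k-ary probabilistic function (PF) is represented as a function from
  argument lists (of length k) to (sub)distributions on nat, given as
  nat \<Rightarrow> real.\<close>

type_synonym pf = "nat list \<Rightarrow> nat \<Rightarrow> real"

text \<open>The fixed computable pairing bijection: Cantor pairing from the library.\<close>
definition pair :: "nat \<Rightarrow> nat \<Rightarrow> nat" where
  "pair a b = prod_encode (a, b)"

definition I2P :: "nat \<Rightarrow> nat \<Rightarrow> real" where
  "I2P n y = (let (a, b) = prod_decode n; q = (real a / real b) in
     if b > 0 \<and> 0 \<le> q \<and> q \<le> 1 then
       (if y = 1 then q else if y = 0 then 1 - q else 0)
     else 0)"

definition comp_pf :: "nat \<Rightarrow> pf \<Rightarrow> pf list \<Rightarrow> pf" where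
  "comp_pf n f gs = (\<lambda>xs y. \<Sum>\<^sub>\<infinity> zs \<in> {zs :: nat list. length zs = n}.
      f zs y * prod_list (map2 (\<lambda>g z. g xs z) gs zs))"

primrec rec_aux :: "pf \<Rightarrow> pf \<Rightarrow> nat list \<Rightarrow> nat \<Rightarrow> nat \<Rightarrow> real" where
  "rec_aux f g xs 0 = f xs"
| "rec_aux f g xs (Suc y) =
     (\<lambda>w. \<Sum>\<^sub>\<infinity> z \<in> (UNIV :: nat set). rec_aux f g xs y z * g (xs @ [y, z]) w)"

definition rec_pf :: "pf \<Rightarrow> pf \<Rightarrow> pf" where
  "rec_pf f g = (\<lambda>xs. rec_aux f g (butlast xs) (last xs))"

definition mu_pf :: "pf \<Rightarrow> pf" where
  "mu_pf f = (\<lambda>xs y. f (xs @ [y]) 0 *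
      (\<Prod>z<y. \<Sum>\<^sub>\<infinity> k \<in> {0<..}. f (xs @ [z]) k))"

inductive_set PR :: "(nat \<times> pf) set" where
  zero: "(1, \<lambda>xs y. if y = 0 then 1 else 0) \<in> PR"
| succ: "(1, \<lambda>xs y. if y = hd xs + 1 then 1 else 0) \<in> PR"
| proj: "1 \<le> m \<Longrightarrow> m \<le> n \<Longrightarrow> (n, \<lambda>xs y. if y = xs ! (m - 1) then 1 else 0) \<in> PR"
| rand: "(1, \<lambda>xs y. if y = hd xs \<or> y = hd xs + 1 then 1 / 2 else 0) \<in> PR"
| comp: "(n, f) \<in> PR \<Longrightarrow> length gs = n \<Longrightarrow> (\<forall>g \<in> set gs. (k, g) \<in> PR)
         \<Longrightarrow> (k, comp_pf n f gs) \<in> PR"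
| recr: "(k, f) \<in> PR \<Longrightarrow> (k + 2, g) \<in> PR \<Longrightarrow> (k + 1, rec_pf f g) \<in> PR"
| mini: "(k + 1, f) \<in> PR \<Longrightarrow> (k, mu_pf f) \<in> PR"

end

theory Submission
  imports Defs
begin

text \<open>
  A function h on k-tuples is represented in PR if the Dirac PF
      concentrated on h is; closure of such functions under composition and primitive recursion
      yields addition, truncated subtraction, case distinction and the triangular numbers, and from
      them the decoding of the Cantor pairing and the digits of the binary expansion of a/b,
      computed by remainder doubling.
  (2) Randomness.  Minimisation applied to the fair coin r yields the geometric distribution
      y \<mapsto> (1/2)^(y+1), switched off (mass 0) when a deterministic 0/1 flag is raised; composing a
      deterministic function d(n, -) after it gives the PF n \<mapsto> law of d(n, Y), Y geometric.
  (3) Analysis.  If d is the binary digit sequence of q, then the geometric weight of the set of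
      positions carrying digit 1 is the sum of the binary expansion, i.e. q, and that of the digit 0
      positions is 1 - q.
  The main theorem takes for the flag the invalidity of the code n and for d the binary digits of
  the decoded fraction.
\<close>

section \<open>Deterministic functions in PR\<close>

lemma infsum_eq_single:
  fixes f :: "'a \<Rightarrow> real"
  assumes "a \<in> A" and "\<And>x. x \<in> A \<Longrightarrow> x \<noteq> a \<Longrightarrow> f x = 0"
  shows "infsum f A = f a"
proof -
  have "infsum f A = infsum f {a}"
    by (rule infsum_cong_neutral) (use assms in auto)
  then show ?thesis by simp
qed

definition dirac :: "(nat list \<Rightarrow> nat) \<Rightarrow> pf" where
  "dirac h = (\<lambda>xs y. if y = h xs then 1 else 0)"

definition det_PR :: "nat \<Rightarrow> (nat list \<Rightarrow> nat) \<Rightarrow> bool" where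
  "det_PR k h \<longleftrightarrow> (\<exists>h'. (k, dirac h') \<in> PR \<and> (\<forall>xs. length xs = k \<longrightarrow> h' xs = h xs))"

lemma det_PR_cong:
  "det_PR k h \<Longrightarrow> (\<And>xs. length xs = k \<Longrightarrow> h xs = h' xs) \<Longrightarrow> det_PR k h'"
  unfolding det_PR_def by metis

lemma det_proj: "i < k \<Longrightarrow> det_PR k (\<lambda>xs. xs ! i)"
proof -
  assume "i < k"
  then have "(k, \<lambda>xs y. if y = xs ! (Suc i - 1) then 1 else 0) \<in> PR"
    by (intro PR.proj) auto
  then show ?thesis unfolding det_PR_def dirac_def by auto
qed

lemma det_zero: "det_PR 1 (\<lambda>xs. 0)"
  using PR.zero unfolding det_PR_def dirac_def by auto

lemma det_succ: "det_PR 1 (\<lambda>xs. Suc (xs ! 0))"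
proof -
  have "det_PR 1 (\<lambda>xs. hd xs + 1)"
    using PR.succ unfolding det_PR_def dirac_def by auto
  then show ?thesis
    by (rule det_PR_cong) (auto simp: length_Suc_conv)
qed

text \<open>Composing with Dirac PFs merely substitutes values: the infinite sum in the generalized
  composition has a single nonzero term.\<close>
lemma prod_map2_dirac:
  "length zs = length hs \<Longrightarrow>
    prod_list (map2 (\<lambda>g z. g xs z) (map dirac hs) zs) = (if zs = map (\<lambda>h. h xs) hs then 1 else 0)"
proof (induction hs arbitrary: zs)
  case (Cons h hs)
  then obtain z zs' where "zs = z # zs'" and "length zs' = length hs"
    by (cases zs) auto
  with Cons.IH show ?case by (simp add: dirac_def)
qed simp

lemma comp_dirac:
  assumes "length hs = n"
  shows "comp_pf n f (map dirac hs) = (\<lambda>xs y. f (map (\<lambda>h. h xs) hs) y)"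
  unfolding comp_pf_def
  by (intro ext, subst infsum_eq_single[where a = "map (\<lambda>h. h _) hs"])
     (use assms in \<open>auto simp: prod_map2_dirac\<close>)

lemma det_comp:
  assumes f: "det_PR n f" and len: "length hs = n" and hs: "\<forall>h\<in>set hs. det_PR k h"
  shows "det_PR k (\<lambda>xs. f (map (\<lambda>h. h xs) hs))"
proof -
  obtain f' where f': "(n, dirac f') \<in> PR" "\<And>xs. length xs = n \<Longrightarrow> f' xs = f xs"
    using f unfolding det_PR_def by blast
  define realizes where
    "realizes h h' \<longleftrightarrow> (k, dirac h') \<in> PR \<and> (\<forall>xs. length xs = k \<longrightarrow> h' xs = h xs)"
    for h h'
  define hs' where "hs' = map (\<lambda>h. SOME h'. realizes h h') hs"
  have realizes_choice: "realizes h (SOME h'. realizes h h')" if "h \<in> set hs" for h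
    using hs that someI_ex[of "realizes h"] unfolding det_PR_def realizes_def by blast
  have "(k, comp_pf n (dirac f') (map dirac hs')) \<in> PR"
    by (rule PR.comp[OF f'(1)]) (use len realizes_choice in \<open>auto simp: hs'_def realizes_def\<close>)
  also have "comp_pf n (dirac f') (map dirac hs') = dirac (\<lambda>xs. f' (map (\<lambda>h. h xs) hs'))"
    by (subst comp_dirac) (auto simp: hs'_def len dirac_def)
  finally have PR_hs': "(k, dirac (\<lambda>xs. f' (map (\<lambda>h. h xs) hs'))) \<in> PR" .
  have "map (\<lambda>h. h xs) hs' = map (\<lambda>h. h xs) hs" if "length xs = k" for xs
    using realizes_choice that by (auto simp: hs'_def realizes_def)
  with PR_hs' f'(2) len show ?thesis
    unfolding det_PR_def by (auto intro!: exI[of _ "\<lambda>xs. f' (map (\<lambda>h. h xs) hs')"])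
qed

lemma det_comp1:
  "det_PR 1 (\<lambda>xs. F (xs ! 0)) \<Longrightarrow> det_PR k a \<Longrightarrow> det_PR k (\<lambda>xs. F (a xs))"
  using det_comp[of 1 "\<lambda>xs. F (xs ! 0)" "[a]" k] by simp

lemma det_comp2:
  "det_PR 2 (\<lambda>xs. F (xs ! 0) (xs ! 1)) \<Longrightarrow> det_PR k a \<Longrightarrow> det_PR k b \<Longrightarrow>
    det_PR k (\<lambda>xs. F (a xs) (b xs))"
  using det_comp[of 2 "\<lambda>xs. F (xs ! 0) (xs ! 1)" "[a, b]" k] by simp

lemma det_suc: "det_PR k a \<Longrightarrow> det_PR k (\<lambda>xs. Suc (a xs))"
  by (rule det_comp1[OF det_succ])

text \<open>Constants of positive arity: zero after a projection, followed by successors.\<close>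
lemma det_const: "0 < k \<Longrightarrow> det_PR k (\<lambda>xs. c)"
proof (induction c)
  case 0
  show ?case using det_comp1[OF det_zero det_proj[OF \<open>0 < k\<close>]] by simp
qed (rule det_suc)

text \<open>Deterministic primitive recursion on argument lists, mirroring the recursion of rec_aux.\<close>
primrec nat_rec_list ::
  "(nat list \<Rightarrow> nat) \<Rightarrow> (nat list \<Rightarrow> nat) \<Rightarrow> nat list \<Rightarrow> nat \<Rightarrow> nat" where
  "nat_rec_list f g xs 0 = f xs"
| "nat_rec_list f g xs (Suc y) = g (xs @ [y, nat_rec_list f g xs y])"

lemma rec_aux_dirac:
  "rec_aux (dirac f) (dirac g) xs y = (\<lambda>w. if w = nat_rec_list f g xs y then 1 else 0)"
proof (induction y)
  case (Suc y)
  let ?r = "nat_rec_list f g xs y"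
  show ?case
  proof
    fix w
    have "rec_aux (dirac f) (dirac g) xs (Suc y) w
        = (\<Sum>\<^sub>\<infinity>z\<in>UNIV. (if z = ?r then 1 else 0) * dirac g (xs @ [y, z]) w)"
      by (simp only: rec_aux.simps Suc.IH)
    also have "\<dots> = dirac g (xs @ [y, ?r]) w"
      by (subst infsum_eq_single[of ?r]) auto
    finally show "rec_aux (dirac f) (dirac g) xs (Suc y) w
        = (if w = nat_rec_list f g xs (Suc y) then 1 else 0)"
      by (simp add: dirac_def)
  qed
qed (simp add: dirac_def)

lemma det_rec:
  assumes f: "det_PR k f" and g: "det_PR (k + 2) g"
    and H0: "\<And>ps. length ps = k \<Longrightarrow> H ps 0 = f ps"
    and HS: "\<And>ps y. length ps = k \<Longrightarrow> H ps (Suc y) = g (ps @ [y, H ps y])"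
  shows "det_PR (k + 1) (\<lambda>xs. H (butlast xs) (last xs))"
proof -
  obtain f' where f': "(k, dirac f') \<in> PR" "\<And>xs. length xs = k \<Longrightarrow> f' xs = f xs"
    using f unfolding det_PR_def by blast
  obtain g' where g': "(k + 2, dirac g') \<in> PR" "\<And>xs. length xs = k + 2 \<Longrightarrow> g' xs = g xs"
    using g unfolding det_PR_def by blast
  have "(k + 1, rec_pf (dirac f') (dirac g')) \<in> PR"
    by (rule PR.recr[OF f'(1) g'(1)])
  also have "rec_pf (dirac f') (dirac g') = dirac (\<lambda>xs. nat_rec_list f' g' (butlast xs) (last xs))"
    unfolding rec_pf_def rec_aux_dirac by (simp add: dirac_def)
  finally have PR_rec: "(k + 1, dirac (\<lambda>xs. nat_rec_list f' g' (butlast xs) (last xs))) \<in> PR" .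
  have "nat_rec_list f' g' ps y = H ps y" if "length ps = k" for ps y
    by (induction y) (use that f'(2) g'(2) H0 HS in auto)
  with PR_rec show ?thesis
    unfolding det_PR_def by (auto intro!: exI[of _ "\<lambda>xs. nat_rec_list f' g' (butlast xs) (last xs)"])
qed

lemma det_rec_comp:
  assumes "det_PR k f" and "det_PR (k + 2) g"
    and "\<And>ps. length ps = k \<Longrightarrow> H ps 0 = f ps"
    and "\<And>ps y. length ps = k \<Longrightarrow> H ps (Suc y) = g (ps @ [y, H ps y])"
    and "length as = k" and "\<forall>a\<in>set as. det_PR m a" and "det_PR m b"
  shows "det_PR m (\<lambda>xs. H (map (\<lambda>a. a xs) as) (b xs))"
proof -
  have "det_PR (k + 1) (\<lambda>xs. H (butlast xs) (last xs))"
    by (rule det_rec) fact+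
  then have "det_PR m (\<lambda>xs. (\<lambda>zs. H (butlast zs) (last zs)) (map (\<lambda>a. a xs) (as @ [b])))"
    by (rule det_comp) (use assms in auto)
  then show ?thesis by simp
qed

lemma det_rec_unary:
  assumes HS: "\<And>y. H (Suc y) = g y (H y)"
    and g: "det_PR 2 (\<lambda>xs. g (xs ! 0) (xs ! 1))" and b: "det_PR m b"
  shows "det_PR m (\<lambda>xs. H (b xs))"
proof -
  have g3: "det_PR 3 (\<lambda>zs. g (zs ! 1) (zs ! 2))"
    by (rule det_comp2[OF g]) (simp_all add: det_proj)
  show ?thesis
    by (rule det_rec_comp[where k = 1 and H = "\<lambda>ps y. H y" and as = "[b]"
          and f = "\<lambda>_. H 0" and g = "\<lambda>zs. g (zs ! 1) (zs ! 2)"])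
       (use g3 in \<open>simp_all add: HS nth_append det_const b numeral_3_eq_3\<close>)
qed

lemma det_rec_param:
  assumes HS: "\<And>x y. H x (Suc y) = g x y (H x y)"
    and "det_PR 1 (\<lambda>xs. H (xs ! 0) 0)" and "det_PR 3 (\<lambda>xs. g (xs ! 0) (xs ! 1) (xs ! 2))"
    and "det_PR m a" and "det_PR m b"
  shows "det_PR m (\<lambda>xs. H (a xs) (b xs))"
proof -
  have "det_PR m (\<lambda>xs. H (map (\<lambda>a. a xs) [a] ! 0) (b xs))"
    by (rule det_rec_comp[where k = 1 and H = "\<lambda>ps y. H (ps ! 0) y" and as = "[a]"
          and g = "\<lambda>zs. g (zs ! 0) (zs ! 1) (zs ! 2)"])
       (use assms in \<open>simp_all add: nth_append numeral_eq_Suc\<close>)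
  then show ?thesis by simp
qed

lemma det_rec_param2:
  assumes HS: "\<And>x x' y. H x x' (Suc y) = g x x' y (H x x' y)"
    and "det_PR 2 (\<lambda>xs. H (xs ! 0) (xs ! 1) 0)"
    and "det_PR 4 (\<lambda>xs. g (xs ! 0) (xs ! 1) (xs ! 2) (xs ! 3))"
    and "det_PR m a" and "det_PR m a'" and "det_PR m b"
  shows "det_PR m (\<lambda>xs. H (a xs) (a' xs) (b xs))"
proof -
  have "det_PR m (\<lambda>xs. H (map (\<lambda>a. a xs) [a, a'] ! 0) (map (\<lambda>a. a xs) [a, a'] ! 1) (b xs))"
    by (rule det_rec_comp[where k = 2 and H = "\<lambda>ps y. H (ps ! 0) (ps ! 1) y" and as = "[a, a']"
          and g = "\<lambda>zs. g (zs ! 0) (zs ! 1) (zs ! 2) (zs ! 3)"])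
       (use assms in \<open>simp_all add: nth_append numeral_eq_Suc\<close>)
  then show ?thesis by simp
qed

lemma det_add: "det_PR k a \<Longrightarrow> det_PR k b \<Longrightarrow> det_PR k (\<lambda>xs. a xs + b xs)"
  by (rule det_rec_param[where H = "(+)" and g = "\<lambda>x y r. Suc r"])
     (simp_all add: det_proj det_suc)

lemma det_double: "det_PR k a \<Longrightarrow> det_PR k (\<lambda>xs. 2 * a xs)"
  using det_add[of k a a] by (simp add: mult_2)

lemma det_pred: "det_PR k a \<Longrightarrow> det_PR k (\<lambda>xs. a xs - 1)"
  by (rule det_rec_unary[where g = "\<lambda>y r. y"]) (simp_all add: det_proj)

lemma det_sub: "det_PR k a \<Longrightarrow> det_PR k b \<Longrightarrow> det_PR k (\<lambda>xs. a xs - b xs)"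
  by (rule det_rec_param[where H = "(-)" and g = "\<lambda>x y r. r - 1"])
     (simp_all add: det_proj det_pred[OF det_proj, simplified])

text \<open>Case distinction, by recursion on the condition with a constant step.\<close>
lemma det_if_zero:
  "det_PR k c \<Longrightarrow> det_PR k a \<Longrightarrow> det_PR k b \<Longrightarrow>
    det_PR k (\<lambda>xs. if c xs = 0 then a xs else b xs)"
  by (rule det_rec_param2[where H = "\<lambda>x x' z. if z = 0 then x else x'" and g = "\<lambda>x x' y r. x'"])
     (simp_all add: det_proj)

lemma det_if_le:
  assumes "det_PR k c" "det_PR k d" "det_PR k a" "det_PR k b"
  shows "det_PR k (\<lambda>xs. if c xs \<le> d xs then a xs else b xs)"
  using det_if_zero[OF det_sub[OF assms(1,2)] assms(3,4)] by simp

lemma det_triangle: "det_PR k a \<Longrightarrow> det_PR k (\<lambda>xs. triangle (a xs))"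
  by (rule det_rec_unary[where g = "\<lambda>y r. r + Suc y"])
     (simp_all add: det_add det_suc det_proj)

lemmas det_intros =
  det_proj det_const det_suc det_add det_double det_pred det_sub det_if_zero det_if_le det_triangle

section \<open>Decoding the pairing\<close>

text \<open>The largest s with triangle s \<le> n, computed by recursion on n; the Cantor code n of (a, b)
  satisfies n = triangle (a + b) + a, so a and b are recovered from s = a + b.\<close>
primrec tri_root :: "nat \<Rightarrow> nat" where
  "tri_root 0 = 0"
| "tri_root (Suc n) = (if triangle (tri_root n) + tri_root n \<le> n then Suc (tri_root n) else tri_root n)"

lemma tri_root_bounds: "triangle (tri_root n) \<le> n \<and> n \<le> triangle (tri_root n) + tri_root n"
  by (induction n) auto

definition code_num :: "nat \<Rightarrow> nat" where
  "code_num n = n - triangle (tri_root n)"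

definition code_den :: "nat \<Rightarrow> nat" where
  "code_den n = tri_root n - code_num n"

lemma prod_decode_eq: "prod_decode n = (code_num n, code_den n)"
proof -
  have "prod_encode (code_num n, code_den n) = n"
    using tri_root_bounds[of n] unfolding prod_encode_def code_num_def code_den_def by simp
  then show ?thesis by (metis prod_encode_inverse)
qed

lemma det_tri_root: "det_PR k a \<Longrightarrow> det_PR k (\<lambda>xs. tri_root (a xs))"
  by (rule det_rec_unary[where g = "\<lambda>n s. if triangle s + s \<le> n then Suc s else s"])
     (auto intro!: det_intros)

lemma det_code_num: "det_PR k a \<Longrightarrow> det_PR k (\<lambda>xs. code_num (a xs))"
  unfolding code_num_def by (intro det_intros det_tri_root)

lemma det_code_den: "det_PR k a \<Longrightarrow> det_PR k (\<lambda>xs. code_den (a xs))"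
  unfolding code_den_def by (intro det_intros det_tri_root det_code_num)

text \<open>A code is valid if it represents a fraction a/b with 0 < b and a \<le> b, i.e. a rational in
  [0, 1]; the flag below is 0 exactly on valid codes.\<close>
definition invalid_code :: "nat \<Rightarrow> nat" where
  "invalid_code n = (if code_den n = 0 then 1 else if code_num n \<le> code_den n then 0 else 1)"

lemma invalid_code_eq_0: "invalid_code n = 0 \<longleftrightarrow> 0 < code_den n \<and> code_num n \<le> code_den n"
  by (simp add: invalid_code_def)

lemma invalid_code_le_1: "invalid_code n \<le> 1"
  by (simp add: invalid_code_def)

lemma det_invalid_code: "0 < k \<Longrightarrow> det_PR k a \<Longrightarrow> det_PR k (\<lambda>xs. invalid_code (a xs))"
  unfolding invalid_code_def by (intro det_intros det_code_num det_code_den)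

lemma I2P_code:
  "I2P n w = (if invalid_code n = 0 then
      (if w = 1 then real (code_num n) / real (code_den n)
       else if w = 0 then 1 - real (code_num n) / real (code_den n) else 0)
    else 0)"
  by (auto simp: I2P_def prod_decode_eq invalid_code_eq_0 Let_def)

section \<open>Binary expansion of a fraction\<close>

text \<open>Long division in base 2: the remainder is doubled, and the digit is 1 exactly when the doubled
  remainder reaches the denominator.\<close>
primrec bin_rem :: "nat \<Rightarrow> nat \<Rightarrow> nat \<Rightarrow> nat" where
  "bin_rem a b 0 = a"
| "bin_rem a b (Suc y) = (if b \<le> 2 * bin_rem a b y then 2 * bin_rem a b y - b else 2 * bin_rem a b y)"

definition bin_digit :: "nat \<Rightarrow> nat \<Rightarrow> nat \<Rightarrow> nat" where
  "bin_digit a b y = (if b \<le> 2 * bin_rem a b y then 1 else 0)"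

lemma det_bin_rem:
  "det_PR k a \<Longrightarrow> det_PR k b \<Longrightarrow> det_PR k y \<Longrightarrow>
    det_PR k (\<lambda>xs. bin_rem (a xs) (b xs) (y xs))"
  by (rule det_rec_param2[where g = "\<lambda>a b y r. if b \<le> 2 * r then 2 * r - b else 2 * r"])
     (auto intro!: det_intros)

text \<open>The digit needs the constants 0 and 1, hence positive arity.\<close>
lemma det_bin_digit:
  assumes "0 < k" "det_PR k a" "det_PR k b" "det_PR k y"
  shows "det_PR k (\<lambda>xs. bin_digit (a xs) (b xs) (y xs))"
  unfolding bin_digit_def by (intro det_intros det_bin_rem assms)

lemma bin_digit_le_1: "bin_digit a b y \<le> 1"
  by (simp add: bin_digit_def)

lemma bin_rem_invariant:
  assumes b: "0 < b" and ab: "a \<le> b"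
  shows "bin_rem a b y \<le> b \<and>
    (\<Sum>i<y. real (bin_digit a b i) / 2 ^ Suc i) = real a / real b - real (bin_rem a b y) / (real b * 2 ^ y)"
proof (induction y)
  case 0
  show ?case using ab by simp
next
  case (Suc y)
  let ?r = "bin_rem a b y"
  from Suc.IH have r_le: "?r \<le> b"
    and sum_y: "(\<Sum>i<y. real (bin_digit a b i) / 2 ^ Suc i) = real a / real b - real ?r / (real b * 2 ^ y)"
    by auto
  show ?case
  proof (cases "b \<le> 2 * ?r")
    case True
    then have "bin_rem a b (Suc y) = 2 * ?r - b" "bin_digit a b y = 1"
      by (simp_all add: bin_digit_def)
    moreover have "real ?r / (real b * 2 ^ y) - 1 / 2 ^ Suc y = real (2 * ?r - b) / (real b * 2 ^ Suc y)"
      using True b by (simp add: of_nat_diff field_simps)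
    ultimately show ?thesis using r_le sum_y by simp
  next
    case False
    then have "bin_rem a b (Suc y) = 2 * ?r" "bin_digit a b y = 0"
      by (simp_all add: bin_digit_def)
    moreover have "real ?r / (real b * 2 ^ y) = real (2 * ?r) / (real b * 2 ^ Suc y)"
      using b by (simp add: field_simps)
    ultimately show ?thesis using False sum_y by simp
  qed
qed

lemma bin_expansion_sums:
  assumes b: "0 < b" and ab: "a \<le> b"
  shows "(\<lambda>i. real (bin_digit a b i) / 2 ^ Suc i) sums (real a / real b)"
proof -
  define err where "err y = real (bin_rem a b y) / (real b * 2 ^ y)" for y
  have partial: "(\<Sum>i<y. real (bin_digit a b i) / 2 ^ Suc i) = real a / real b - err y" for y
    using bin_rem_invariant[OF b ab] unfolding err_def by auto
  have "err \<longlonglongrightarrow> 0"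
  proof (rule Lim_null_comparison)
    have "norm (err y) \<le> (1/2) ^ y" for y
    proof -
      have rem_le: "real (bin_rem a b y) \<le> real b"
        using bin_rem_invariant[OF b ab, of y] by simp
      have "norm (err y) = real (bin_rem a b y) / (real b * 2 ^ y)"
        by (simp add: err_def)
      also have "\<dots> \<le> real b / (real b * 2 ^ y)"
        by (rule divide_right_mono) (use rem_le in auto)
      also have "\<dots> = (1/2) ^ y"
        using b by (simp add: power_divide)
      finally show ?thesis .
    qed
    then show "\<forall>\<^sub>F y in sequentially. norm (err y) \<le> (1/2) ^ y"
      by simp
    show "(\<lambda>y. (1/2::real) ^ y) \<longlonglongrightarrow> 0"
      by (rule LIMSEQ_power_zero) simp
  qed
  then have "(\<lambda>y. real a / real b - err y) \<longlonglongrightarrow> real a / real b - 0"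
    by (intro tendsto_intros)
  then show ?thesis
    unfolding sums_def partial by simp
qed

lemma binary_digit_mass:
  fixes d :: "nat \<Rightarrow> nat" and q :: real
  assumes d01: "\<And>i. d i \<le> 1" and sums: "(\<lambda>i. real (d i) / 2 ^ Suc i) sums q"
  shows "(\<Sum>\<^sub>\<infinity>y. (if d y = w then 1 else 0) * (1/2) ^ Suc y) =
    (if w = 1 then q else if w = 0 then 1 - q else 0)"
proof -
  have d_cases: "d i = 0 \<or> d i = 1" for i
    using d01[of i] by auto
  have ones: "(\<lambda>i. real (d i) * (1/2) ^ Suc i) sums q"
    using sums by (simp add: power_divide)
  have zeros: "(\<lambda>i. (1 - real (d i)) * (1/2) ^ Suc i) sums (1 - q)"
    using sums_diff[OF power_half_series ones] by (simp add: left_diff_distrib diff_divide_distrib)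
  consider "w = 1" | "w = 0" | "w \<noteq> 0" "w \<noteq> 1"
    by blast
  then show ?thesis
  proof cases
    case 1
    have "(if d y = 1 then 1 else 0) = real (d y)" for y
      using d_cases[of y] by auto
    moreover have "((\<lambda>i. real (d i) * (1/2) ^ Suc i) has_sum q) UNIV"
      by (rule sums_nonneg_imp_has_sum[OF ones]) simp
    ultimately show ?thesis
      using 1 by (simp add: infsumI)
  next
    case 2
    have "(if d y = 0 then 1 else 0) = 1 - real (d y)" for y
      using d_cases[of y] by auto
    moreover have "((\<lambda>i. (1 - real (d i)) * (1/2) ^ Suc i) has_sum (1 - q)) UNIV"
      by (rule sums_nonneg_imp_has_sum[OF zeros]) (use d01 in simp)
    ultimately show ?thesis
      using 2 by (simp add: infsumI)
  next
    case 3
    then have "d y \<noteq> w" for y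
      using d_cases[of y] by auto
    then show ?thesis
      using 3 by simp
  qed
qed

section \<open>The probabilistic stages\<close>

text \<open>Minimising the fair coin started at v(n) \<in> {0, 1}: for v(n) = 0 the search stops at step y
  with probability (1/2)^(y+1); for v(n) = 1 the coin never shows 0, so no mass is produced.\<close>
lemma geometric_PR:
  assumes v: "det_PR 2 (\<lambda>xs. v (xs ! 0))" and v01: "\<And>n. v n \<le> 1"
  shows "\<exists>M. (1, M) \<in> PR \<and> (\<forall>n y. M [n] y = (if v n = 0 then (1/2) ^ Suc y else 0))"
proof -
  obtain V where V: "(2, dirac V) \<in> PR" "\<And>xs. length xs = 2 \<Longrightarrow> V xs = v (xs ! 0)"
    using v unfolding det_PR_def by blast
  define rnd :: pf where "rnd = (\<lambda>xs y. if y = hd xs \<or> y = hd xs + 1 then 1 / 2 else 0)"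
  define G where "G = comp_pf 1 rnd [dirac V]"
  have G_PR: "(2, G) \<in> PR"
    unfolding G_def rnd_def by (rule PR.comp[OF PR.rand]) (use V in auto)
  have G_val: "G [n, z] k = (if k = v n \<or> k = v n + 1 then 1/2 else 0)" for n z k
    using comp_dirac[of "[V]" 1 rnd] V(2)[of "[n, z]"] unfolding G_def rnd_def by simp
  have "(1, mu_pf G) \<in> PR"
    using PR.mini[of 1 G] G_PR by (simp add: numeral_2_eq_2)
  moreover have "mu_pf G [n] y = (if v n = 0 then (1/2) ^ Suc y else 0)" for n y
  proof (cases "v n = 0")
    case True
    have continue: "(\<Sum>\<^sub>\<infinity>k\<in>{0<..}. G [n, z] k) = 1/2" for z
      by (subst infsum_eq_single[of 1]) (auto simp: G_val True)
    show ?thesis using True by (simp add: mu_pf_def G_val continue)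
  next
    case False
    then show ?thesis using v01[of n] by (simp add: mu_pf_def G_val)
  qed
  ultimately show ?thesis by blast
qed

lemma mixture_PR:
  assumes M: "(1, M) \<in> PR" and d: "det_PR 2 (\<lambda>xs. d (xs ! 0) (xs ! 1))"
  shows "\<exists>F. (1, F) \<in> PR \<and>
    (\<forall>n w. F [n] w = (\<Sum>\<^sub>\<infinity>y. (if d n y = w then 1 else 0) * M [n] y))"
proof -
  obtain D where D: "(2, dirac D) \<in> PR" "\<And>xs. length xs = 2 \<Longrightarrow> D xs = d (xs ! 0) (xs ! 1)"
    using d unfolding det_PR_def by blast
  have proj: "(1, dirac (\<lambda>xs. xs ! 0)) \<in> PR"
    using PR.proj[of 1 1] by (simp add: dirac_def)
  define F where "F = comp_pf 2 (dirac D) [dirac (\<lambda>xs. xs ! 0), M]"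
  have "(1, F) \<in> PR"
    unfolding F_def by (rule PR.comp[OF D(1)]) (use proj M in auto)
  moreover have "F [n] w = (\<Sum>\<^sub>\<infinity>y. (if d n y = w then 1 else 0) * M [n] y)" for n w
  proof -
    let ?g = "\<lambda>zs. (if d n (zs ! 1) = w then 1 else 0) * M [n] (zs ! 1)"
    have summand: "dirac D zs w * prod_list (map2 (\<lambda>g z. g [n] z) [dirac (\<lambda>xs. xs ! 0), M] zs)
        = (if zs \<in> range (\<lambda>y. [n, y]) then ?g zs else 0)" if len: "length zs = 2" for zs
    proof -
      obtain a b where "zs = [a, b]"
        using len by (cases zs; cases "tl zs") auto
      then show ?thesis by (auto simp: dirac_def D(2))
    qed
    have "F [n] w =
        (\<Sum>\<^sub>\<infinity>zs\<in>{zs. length zs = 2}. if zs \<in> range (\<lambda>y. [n, y]) then ?g zs else 0)"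
      unfolding F_def comp_pf_def by (rule infsum_cong) (simp add: summand)
    also have "\<dots> = (\<Sum>\<^sub>\<infinity>zs\<in>range (\<lambda>y. [n, y]). ?g zs)"
      by (rule infsum_cong_neutral) auto
    also have "\<dots> = (\<Sum>\<^sub>\<infinity>y. ?g [n, y])"
      by (subst infsum_reindex) (auto simp: inj_on_def o_def)
    finally show ?thesis by simp
  qed
  ultimately show ?thesis by blast
qed

theorem mainTheorem9:
  shows "\<exists>f. (1, f) \<in> PR \<and> (\<forall>n. f [n] = I2P n)"
proof -
  obtain M where M: "(1, M) \<in> PR"
    and M_val: "\<And>n y. M [n] y = (if invalid_code n = 0 then (1/2) ^ Suc y else 0)"
    using geometric_PR[OF det_invalid_code[OF _ det_proj] invalid_code_le_1] by auto
  have digits: "det_PR 2 (\<lambda>xs. bin_digit (code_num (xs ! 0)) (code_den (xs ! 0)) (xs ! 1))"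
    by (intro det_bin_digit det_code_num det_code_den det_proj) simp_all
  obtain F where F: "(1, F) \<in> PR"
    and F_val: "\<And>n w. F [n] w =
      (\<Sum>\<^sub>\<infinity>y. (if bin_digit (code_num n) (code_den n) y = w then 1 else 0) * M [n] y)"
    using mixture_PR[OF M digits] by auto
  have "F [n] w = I2P n w" for n w
  proof (cases "invalid_code n = 0")
    case True
    then have "0 < code_den n" "code_num n \<le> code_den n"
      by (simp_all add: invalid_code_eq_0)
    from binary_digit_mass[OF bin_digit_le_1 bin_expansion_sums[OF this]]
    show ?thesis using True by (simp add: F_val M_val I2P_code)
  next
    case False
    then show ?thesis by (simp add: F_val M_val I2P_code)
  qed
  then show ?thesis using F by blast
qed

end
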